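(* Let $d\ge0$ and $n>d$ be integers and let $\gamma=(\gamma_1,\dots,\gamma_l)$, $l\ge1$, be a partition with positive parts (i.e. $\gamma\neq(0)$). Enumerate $2^{\{1,\dots,l\}}=\{I_1,\dots,I_{2^l}\}$ with $I_1=\emptyset$. Then $$\lambda_{n,d}(\gamma)=\frac{1}{\prod_{k=1}^{d}m_k(\gamma)!}\sum_{\nu\in N(n,d;\gamma)}\frac{n!}{\nu(I_1)!\,\nu(I_2)!\cdots\nu(I_{2^l})!} =\frac{1}{\prod_{k=1}^{d}m_k(\gamma)!}\sum_{\nu\in N(n,d;\gamma)}\frac{(\nu(I_2)+\cdots+\nu(I_{2^l}))!}{\nu(I_2)!\cdots\nu(I_{2^l})!}\binom{n}{\nu(I_2)+\cdots+\nu(I_{2^l})}.$$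
   Context: For a finite set $X$ let $\operatorname{codim}_d(X)=d+1-|X|$. For a finite collection $\{T_1,\dots,T_l\}$ of pairwise distinct finite sets put $\rho_d(\{T_1,\dots,T_l\})=\sum_{i=1}^l\operatorname{codim}_d(T_i)$ (with $\rho_d(\emptyset)=0$) and $D_d(\{T_1,\dots,T_l\})=\operatorname{codim}_d(T_1\cap\cdots\cap T_l)-\rho_d(\{T_1,\dots,T_l\})$. For integers $d\ge0$, $n>d$, $L(n,d)$ is the set of all collections $T$ of subsets of $\{1,\dots,n\}$ such that (i) $D_d(T')>0$ for every $T'\subset T$ with $|T'|>1$, and (ii) $0\le|T_i|\le d$ for every $T_i\in T$. A partition is a weakly decreasing sequence of nonnegative integers. The type of $T=\{T_1,\dots,T_l\}\in L(n,d)$, listed so that $|T_1|\le\cdots\le|T_l|$, is $\gamma_d(T)=(\operatorname{codim}_d(T_1),\dots,\operatorname{codim}_d(T_l))$ (and $\gamma_d(\emptyset)=(0)$). $\lambda_{n,d}(\gamma)$ is the number of $T\in L(n,d)$ with $\gamma_d(T)=\gamma$. $m_k(\gamma)=|\{i:\gamma_i=k\}|$. $N(n,d;\gamma)$ is the set of maps $\nu:2^{\{1,\dots,l\}}\to\mathbb{Z}_{\ge0}$ such that: (1) $\sum_{I:\,i\in I}\nu(I)=d+1-\gamma_i$ for all $i=1,\dots,l$; (2) $\sum_{I':\,I\subset I'}\nu(I')<d+1-\sum_{i\in I}\gamma_i$ for all $I\subset\{1,\dots,l\}$ with $|I|\ge2$; (3) $\sum_{I\in 2^{\{1,\dots,l\}}}\nu(I)=n$.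 *)

theory Defs
  imports Complex_Main "HOL-Library.Multiset"
begin

definition codim :: "nat \<Rightarrow> nat set \<Rightarrow> int" where
  "codim d X = int d + 1 - int (card X)"

definition rho :: "nat \<Rightarrow> nat set set \<Rightarrow> int" where
  "rho d T = (\<Sum>X\<in>T. codim d X)"

definition Dfun :: "nat \<Rightarrow> nat set set \<Rightarrow> int" where
  "Dfun d T = codim d (\<Inter>T) - rho d T"

definition Lset :: "nat \<Rightarrow> nat \<Rightarrow> nat set set set" where
  "Lset n d = {T. T \<subseteq> Pow {1..n}
      \<and> (\<forall>T'\<subseteq>T. card T' > 1 \<longrightarrow> Dfun d T' > 0)
      \<and> (\<forall>X\<in>T. card X \<le> d)}"

text \<open>Type gamma_d(T): the codimensions listed weakly decreasing; gamma_d({}) = (0).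
  (For T in L(n,d) every member has at most d elements, so the nat codimension is exact.)\<close>
definition gammaT :: "nat \<Rightarrow> nat set set \<Rightarrow> nat list" where
  "gammaT d T = (if T = {} then [0]
     else rev (sorted_list_of_multiset (image_mset (\<lambda>X. d + 1 - card X) (mset_set T))))"

definition lambda_count :: "nat \<Rightarrow> nat \<Rightarrow> nat list \<Rightarrow> nat" where
  "lambda_count n d \<gamma> = card {T \<in> Lset n d. gammaT d T = \<gamma>}"

definition mult_part :: "nat \<Rightarrow> nat list \<Rightarrow> nat" where
  "mult_part k \<gamma> = count_list \<gamma> k"

text \<open>N(n,d;gamma): maps nu on the power set of {1..l} (l = length gamma, gamma_i = gamma!(i-1)),
  represented as functions nat set => nat vanishing outside Pow {1..l}.\<close>
definition Nset :: "nat \<Rightarrow> nat \<Rightarrow> nat list \<Rightarrow> (nat set \<Rightarrow> nat) set" where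
  "Nset n d \<gamma> = {\<nu>. (\<forall>I. I \<notin> Pow {1..length \<gamma>} \<longrightarrow> \<nu> I = 0)
     \<and> (\<forall>i\<in>{1..length \<gamma>}.
          int (\<Sum>I\<in>{I\<in>Pow {1..length \<gamma>}. i \<in> I}. \<nu> I) = int d + 1 - int (\<gamma> ! (i - 1)))
     \<and> (\<forall>I\<subseteq>{1..length \<gamma>}. card I \<ge> 2 \<longrightarrow>
          int (\<Sum>I'\<in>{I'\<in>Pow {1..length \<gamma>}. I \<subseteq> I'}. \<nu> I')
            < int d + 1 - (\<Sum>i\<in>I. int (\<gamma> ! (i - 1))))
     \<and> (\<Sum>I\<in>Pow {1..length \<gamma>}. \<nu> I) = n}"

end

theory Submission
  imports Defs "HOL-Library.FuncSet" "HOL-Combinatorics.Permutations"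
begin

(* Listing the members of a collection T in L(n,d) of type gamma as T_1, ..., T_l with
   codim T_i = gamma_i gives a labelled configuration i |-> T_i.  Conversely, a labelled
   configuration is injective (two equal members would violate condition (i) for that pair),
   and its image lies in L(n,d) and has type gamma.  Each T has exactly prod_k m_k(gamma)!
   labellings, one per colour-preserving bijection; the colour d+1 contributes no factor,
   since only the empty set has codimension d+1.
   Transposing a labelled configuration gives a map g : {1..n} -> 2^{1..l}, j |-> {i. j : T_i},
   and the conditions on the T_i become exactly the conditions defining N(n,d;gamma) for the
   fibre sizes nu(I) = |g^-1(I)|.  The maps with prescribed fibre sizes nu are counted by the
   multinomial coefficient n! / prod_I nu(I)!. *)

section \<open>Maps with prescribed fibre sizes and colour-preserving bijections\<close>

definition fibre_maps :: "'b set \<Rightarrow> 'a set \<Rightarrow> ('a \<Rightarrow> nat) \<Rightarrow> ('b \<Rightarrow> 'a) set" where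
  "fibre_maps A P \<nu> = {g \<in> A \<rightarrow>\<^sub>E P. \<forall>I\<in>P. card {j\<in>A. g j = I} = \<nu> I}"

lemma finite_fibre_maps: "finite A \<Longrightarrow> finite P \<Longrightarrow> finite (fibre_maps A P \<nu>)"
  unfolding fibre_maps_def by (rule finite_subset[OF _ finite_PiE]) auto

lemma bij_betw_fibre_maps_insert:
  assumes "I0 \<notin> P"
  shows "bij_betw (\<lambda>g. ({j\<in>A. g j = I0}, restrict g (A - {j\<in>A. g j = I0})))
           (fibre_maps A (insert I0 P) \<nu>)
           (SIGMA B:{B. B \<subseteq> A \<and> card B = \<nu> I0}. fibre_maps (A - B) P \<nu>)"
proof (rule bij_betw_byWitness[where f' = "\<lambda>(B, h) j. if j \<in> B then I0 else h j"])
  show "\<forall>g\<in>fibre_maps A (insert I0 P) \<nu>.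
      (\<lambda>(B, h) j. if j \<in> B then I0 else h j) ({j\<in>A. g j = I0}, restrict g (A - {j\<in>A. g j = I0})) = g"
    by (auto simp: fibre_maps_def fun_eq_iff PiE_def extensional_def)
  show "(\<lambda>g. ({j\<in>A. g j = I0}, restrict g (A - {j\<in>A. g j = I0}))) ` fibre_maps A (insert I0 P) \<nu>
      \<subseteq> (SIGMA B:{B. B \<subseteq> A \<and> card B = \<nu> I0}. fibre_maps (A - B) P \<nu>)"
  proof (rule image_subsetI)
    fix g assume g: "g \<in> fibre_maps A (insert I0 P) \<nu>"
    define B where "B = {j\<in>A. g j = I0}"
    have "{j\<in>A - B. restrict g (A - B) j = I} = {j\<in>A. g j = I}" if "I \<in> P" for I
      using that assms by (auto simp: B_def)
    with g show "({j\<in>A. g j = I0}, restrict g (A - {j\<in>A. g j = I0}))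
        \<in> (SIGMA B:{B. B \<subseteq> A \<and> card B = \<nu> I0}. fibre_maps (A - B) P \<nu>)"
      by (auto simp: fibre_maps_def B_def)
  qed
  show "\<forall>x\<in>(SIGMA B:{B. B \<subseteq> A \<and> card B = \<nu> I0}. fibre_maps (A - B) P \<nu>).
      (\<lambda>g. ({j\<in>A. g j = I0}, restrict g (A - {j\<in>A. g j = I0})))
        ((\<lambda>(B, h) j. if j \<in> B then I0 else h j) x) = x"
  proof (rule ballI)
    fix x assume "x \<in> (SIGMA B:{B. B \<subseteq> A \<and> card B = \<nu> I0}. fibre_maps (A - B) P \<nu>)"
    then obtain B h where x: "x = (B, h)" "B \<subseteq> A" "h \<in> fibre_maps (A - B) P \<nu>" by blast
    then have "h \<in> (A - B) \<rightarrow>\<^sub>E P" by (simp add: fibre_maps_def)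
    then have "{j\<in>A. (if j \<in> B then I0 else h j) = I0} = B" using x assms by auto
    with \<open>h \<in> (A - B) \<rightarrow>\<^sub>E P\<close> show "(\<lambda>g. ({j\<in>A. g j = I0}, restrict g (A - {j\<in>A. g j = I0})))
        ((\<lambda>(B, h) j. if j \<in> B then I0 else h j) x) = x"
      by (auto simp: x fun_eq_iff PiE_def extensional_def)
  qed
  show "(\<lambda>(B, h) j. if j \<in> B then I0 else h j) ` (SIGMA B:{B. B \<subseteq> A \<and> card B = \<nu> I0}. fibre_maps (A - B) P \<nu>)
      \<subseteq> fibre_maps A (insert I0 P) \<nu>"
  proof (rule image_subsetI, clarify)
    fix B h assume B: "B \<subseteq> A" "card B = \<nu> I0" and h: "h \<in> fibre_maps (A - B) P \<nu>"
    have hE: "h \<in> (A - B) \<rightarrow>\<^sub>E P" using h by (simp add: fibre_maps_def)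
    have "{j\<in>A. (if j \<in> B then I0 else h j) = I0} = B" using B hE assms by auto
    moreover have "{j\<in>A. (if j \<in> B then I0 else h j) = I} = {j\<in>A - B. h j = I}" if "I \<in> P" for I
      using that assms by auto
    ultimately show "(\<lambda>j. if j \<in> B then I0 else h j) \<in> fibre_maps A (insert I0 P) \<nu>"
      using B h hE by (auto simp: fibre_maps_def PiE_def extensional_def Pi_def)
  qed
qed

lemma card_fibre_maps_multinomial:
  assumes "finite P" "finite A" "(\<Sum>I\<in>P. \<nu> I) = card A"
  shows "card (fibre_maps A P \<nu>) * (\<Prod>I\<in>P. fact (\<nu> I)) = (fact (card A) :: nat)"
  using assms
proof (induction P arbitrary: A rule: finite_induct)
  case empty
  then show ?case by (simp add: fibre_maps_def)
next
  case (insert I0 P A)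
  have "card (A - B) = card A - \<nu> I0" if "B \<subseteq> A" "card B = \<nu> I0" for B
    using that insert.prems by (simp add: card_Diff_subset finite_subset)
  then have IH: "card (fibre_maps (A - B) P \<nu>) * (\<Prod>I\<in>P. fact (\<nu> I)) = fact (card A - \<nu> I0)"
    if "B \<subseteq> A" "card B = \<nu> I0" for B
    using insert.IH[of "A - B"] insert.prems insert.hyps that by simp
  have "card (fibre_maps A (insert I0 P) \<nu>)
      = card (SIGMA B:{B. B \<subseteq> A \<and> card B = \<nu> I0}. fibre_maps (A - B) P \<nu>)"
    by (rule bij_betw_same_card[OF bij_betw_fibre_maps_insert[OF insert.hyps(2)]])
  also have "\<dots> = (\<Sum>B\<in>{B. B \<subseteq> A \<and> card B = \<nu> I0}. card (fibre_maps (A - B) P \<nu>))"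
    using insert by (intro card_SigmaI) (auto simp: finite_fibre_maps)
  finally have "card (fibre_maps A (insert I0 P) \<nu>) * (\<Prod>I\<in>insert I0 P. fact (\<nu> I))
      = (\<Sum>B\<in>{B. B \<subseteq> A \<and> card B = \<nu> I0}. card (fibre_maps (A - B) P \<nu>) * (\<Prod>I\<in>P. fact (\<nu> I)))
        * fact (\<nu> I0)"
    using insert.hyps by (simp add: sum_distrib_left sum_distrib_right mult_ac)
  also have "\<dots> = (card A choose \<nu> I0) * fact (card A - \<nu> I0) * fact (\<nu> I0)"
    using IH insert.prems by (simp add: n_subsets)
  also have "\<dots> = fact (card A)"
    using binomial_fact_lemma[of "\<nu> I0" "card A"] insert.prems insert.hyps by (simp add: mult_ac)
  finally show ?case .
qed

lemma real_card_fibre_maps: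
  assumes "finite P" "finite A" "(\<Sum>I\<in>P. \<nu> I) = card A"
  shows "real (card (fibre_maps A P \<nu>)) = real (fact (card A)) / (\<Prod>I\<in>P. real (fact (\<nu> I)))"
proof -
  have "real (card (fibre_maps A P \<nu>)) * (\<Prod>I\<in>P. real (fact (\<nu> I))) = real (fact (card A))"
    using card_fibre_maps_multinomial[OF assms] by (metis of_nat_mult of_nat_prod)
  moreover have "(\<Prod>I\<in>P. real (fact (\<nu> I))) \<noteq> 0" by (simp add: prod_zero_iff assms(1))
  ultimately show ?thesis by (simp add: field_simps)
qed

lemma multinomial_split_off:
  fixes \<nu> :: "'a \<Rightarrow> nat"
  assumes "finite P" "I0 \<in> P" "(\<Sum>I\<in>P. \<nu> I) = n"
  shows "real (fact n) / (\<Prod>I\<in>P. real (fact (\<nu> I)))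
    = real (fact (\<Sum>I\<in>P - {I0}. \<nu> I)) / (\<Prod>I\<in>P - {I0}. real (fact (\<nu> I)))
      * real (n choose (\<Sum>I\<in>P - {I0}. \<nu> I))"
proof -
  define s where "s = (\<Sum>I\<in>P - {I0}. \<nu> I)"
  have "n = \<nu> I0 + s" using assms by (simp add: s_def sum.remove)
  then have "s \<le> n" and "\<nu> I0 = n - s" by auto
  moreover have "(\<Prod>I\<in>P. real (fact (\<nu> I))) = real (fact (\<nu> I0)) * (\<Prod>I\<in>P - {I0}. real (fact (\<nu> I)))"
    using assms by (simp add: prod.remove)
  moreover have "(\<Prod>I\<in>P - {I0}. real (fact (\<nu> I))) \<noteq> 0" by (simp add: prod_zero_iff assms)
  ultimately show ?thesis
    unfolding s_def[symmetric] using binomial_fact[of s n, where 'a = real] by (simp add: field_simps)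
qed

definition colour_bijections :: "'a set \<Rightarrow> 'b set \<Rightarrow> ('a \<Rightarrow> 'c) \<Rightarrow> ('b \<Rightarrow> 'c) \<Rightarrow> ('a \<Rightarrow> 'b) set" where
  "colour_bijections L T a b = {h \<in> L \<rightarrow>\<^sub>E T. bij_betw h L T \<and> (\<forall>i\<in>L. b (h i) = a i)}"

lemma finite_colour_bijections: "finite L \<Longrightarrow> finite T \<Longrightarrow> finite (colour_bijections L T a b)"
  unfolding colour_bijections_def by (rule finite_subset[OF _ finite_PiE]) auto

lemma bij_betw_colour_bijections_insert:
  assumes "i0 \<notin> L"
  shows "bij_betw (\<lambda>h. (h i0, h(i0 := undefined)))
           (colour_bijections (insert i0 L) T a b)
           (SIGMA X:{X\<in>T. b X = a i0}. colour_bijections L (T - {X}) a b)"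
proof (rule bij_betw_byWitness[where f' = "\<lambda>(X, h). h(i0 := X)"])
  show "\<forall>h\<in>colour_bijections (insert i0 L) T a b. (\<lambda>(X, h). h(i0 := X)) (h i0, h(i0 := undefined)) = h"
    by simp
  show "\<forall>x\<in>(SIGMA X:{X\<in>T. b X = a i0}. colour_bijections L (T - {X}) a b).
      (\<lambda>h. (h i0, h(i0 := undefined))) ((\<lambda>(X, h). h(i0 := X)) x) = x"
    using assms by (auto simp: colour_bijections_def fun_eq_iff PiE_def extensional_def)
  show "(\<lambda>h. (h i0, h(i0 := undefined))) ` colour_bijections (insert i0 L) T a b
      \<subseteq> (SIGMA X:{X\<in>T. b X = a i0}. colour_bijections L (T - {X}) a b)"
  proof (rule image_subsetI)
    fix h assume "h \<in> colour_bijections (insert i0 L) T a b"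
    then have hE: "h \<in> insert i0 L \<rightarrow>\<^sub>E T" and hb: "bij_betw h (insert i0 L) T"
      and hc: "\<forall>i\<in>insert i0 L. b (h i) = a i" by (auto simp: colour_bijections_def)
    have "h i0 \<in> T" using hE by auto
    then have "bij_betw h L (T - {h i0})"
      using bij_betw_DiffI[OF hb bij_betw_singletonI[of h i0 "h i0"]] assms by simp
    then have "bij_betw (h(i0 := undefined)) L (T - {h i0})"
      by (rule bij_betw_cong[THEN iffD1, rotated]) (use assms in auto)
    moreover have "h(i0 := undefined) \<in> L \<rightarrow>\<^sub>E T - {h i0}"
      using \<open>bij_betw h L (T - {h i0})\<close> hE assms
      by (auto simp: bij_betw_def PiE_def extensional_def)
    ultimately show "(h i0, h(i0 := undefined)) \<in> (SIGMA X:{X\<in>T. b X = a i0}. colour_bijections L (T - {X}) a b)"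
      using hE hc assms by (auto simp: colour_bijections_def)
  qed
  show "(\<lambda>(X, h). h(i0 := X)) ` (SIGMA X:{X\<in>T. b X = a i0}. colour_bijections L (T - {X}) a b)
      \<subseteq> colour_bijections (insert i0 L) T a b"
  proof (rule image_subsetI, clarify)
    fix X h assume X: "X \<in> T" "b X = a i0" and h: "h \<in> colour_bijections L (T - {X}) a b"
    then have hE: "h \<in> L \<rightarrow>\<^sub>E T - {X}" and hb: "bij_betw h L (T - {X})" and hc: "\<forall>i\<in>L. b (h i) = a i"
      by (auto simp: colour_bijections_def)
    have "bij_betw (h(i0 := X)) L (T - {X})"
      by (rule bij_betw_cong[THEN iffD1, OF _ hb]) (use assms in auto)
    then have "bij_betw (h(i0 := X)) (insert i0 L) T"
      using notIn_Un_bij_betw[of i0 L "h(i0 := X)" "T - {X}"] assms X by (simp add: insert_absorb)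
    then show "h(i0 := X) \<in> colour_bijections (insert i0 L) T a b"
      using hE hc X assms by (auto simp: colour_bijections_def PiE_def extensional_def)
  qed
qed

lemma card_filter_insert:
  assumes "finite L" "i0 \<notin> L"
  shows "card {i\<in>insert i0 L. a i = k} = card {i\<in>L. a i = k} + (if a i0 = k then 1 else 0)"
proof -
  have "{i\<in>insert i0 L. a i = k} = (if a i0 = k then insert i0 {i\<in>L. a i = k} else {i\<in>L. a i = k})"
    by auto
  then show ?thesis using assms by simp
qed

lemma card_colour_bijections:
  assumes "finite L" "finite T" "finite K" "a ` L \<subseteq> K"
    and "\<And>k. card {i\<in>L. a i = k} = card {X\<in>T. b X = k}"
  shows "card (colour_bijections L T a b) = (\<Prod>k\<in>K. fact (card {i\<in>L. a i = k}))"
  using assms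
proof (induction L arbitrary: T rule: finite_induct)
  case empty
  have "T = {}"
  proof (rule ccontr)
    assume "T \<noteq> {}"
    then obtain X where "X \<in> T" by blast
    with empty.prems(1) have "card {Y\<in>T. b Y = b X} \<noteq> 0" by (auto simp: card_eq_0_iff)
    with empty.prems(4) show False by simp
  qed
  then have "colour_bijections {} T a b = {\<lambda>_. undefined}"
    by (auto simp: colour_bijections_def bij_betw_def)
  then show ?case by simp
next
  case (insert i0 L T)
  define c where "c k = card {i\<in>L. a i = k}" for k
  have c_insert: "card {i\<in>insert i0 L. a i = k} = c k + (if a i0 = k then 1 else 0)" for k
    unfolding c_def using insert.hyps by (rule card_filter_insert)
  have IH: "card (colour_bijections L (T - {X}) a b) = (\<Prod>k\<in>K. fact (c k))" if "X \<in> T" "b X = a i0" for X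
  proof (unfold c_def, rule insert.IH)
    have "{Y\<in>T. b Y = k} = {Y\<in>insert X (T - {X}). b Y = k}" for k using \<open>X \<in> T\<close> by auto
    then show "card {i\<in>L. a i = k} = card {Y\<in>T - {X}. b Y = k}" for k
      using insert.prems(4)[of k] c_insert[of k] card_filter_insert[of "T - {X}" X b k] insert.prems(1) that
      by (simp add: c_def)
  qed (use insert.prems in auto)
  have "card (colour_bijections (insert i0 L) T a b)
      = card (SIGMA X:{X\<in>T. b X = a i0}. colour_bijections L (T - {X}) a b)"
    by (rule bij_betw_same_card[OF bij_betw_colour_bijections_insert[OF insert.hyps(2)]])
  also have "\<dots> = (\<Sum>X\<in>{X\<in>T. b X = a i0}. card (colour_bijections L (T - {X}) a b))"
    using insert by (intro card_SigmaI) (auto simp: finite_colour_bijections)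
  also have "\<dots> = (c (a i0) + 1) * (\<Prod>k\<in>K. fact (c k))"
    using IH insert.prems(4)[of "a i0"] c_insert[of "a i0"] by simp
  also have "\<dots> = (\<Prod>k\<in>K. fact (card {i\<in>insert i0 L. a i = k}))"
  proof -
    have "fact (card {i\<in>insert i0 L. a i = k}) = (if k = a i0 then c k + 1 else 1) * fact (c k)" for k
      unfolding c_insert by auto
    then show ?thesis
      using insert.prems(2,3) by (simp add: prod.distrib prod.delta)
  qed
  finally show ?case .
qed

section \<open>Labelled configurations and the set N(n,d;gamma)\<close>

(* f i plays the role of T_i; by Dfun_image below, the last clause is condition (i) of L(n,d)
   for the subcollections of {T_1, ..., T_l}. *)
definition labelled_configs :: "nat \<Rightarrow> nat \<Rightarrow> nat list \<Rightarrow> (nat \<Rightarrow> nat set) set" where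
  "labelled_configs n d \<gamma> = {f \<in> {1..length \<gamma>} \<rightarrow>\<^sub>E Pow {1..n}.
      (\<forall>i\<in>{1..length \<gamma>}. int (card (f i)) = int d + 1 - int (\<gamma> ! (i - 1)))
    \<and> (\<forall>I\<subseteq>{1..length \<gamma>}. 2 \<le> card I \<longrightarrow>
         int (card {j\<in>{1..n}. \<forall>i\<in>I. j \<in> f i}) < int d + 1 - (\<Sum>i\<in>I. int (\<gamma> ! (i - 1))))}"

lemma finite_labelled_configs: "finite (labelled_configs n d \<gamma>)"
  by (rule finite_subset[of _ "{1..length \<gamma>} \<rightarrow>\<^sub>E Pow {1..n}"])
    (auto simp: labelled_configs_def finite_PiE)

lemma card_preimage_eq_sum_fibres:
  assumes "finite A" "finite Q"
  shows "card {j\<in>A. g j \<in> Q} = (\<Sum>I\<in>Q. card {j\<in>A. g j = I})"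
proof -
  have "{j\<in>A. g j \<in> Q} = (\<Union>I\<in>Q. {j\<in>A. g j = I})" by auto
  also have "card \<dots> = (\<Sum>I\<in>Q. card {j\<in>A. g j = I})"
    by (rule card_UN_disjoint) (use assms in auto)
  finally show ?thesis .
qed

lemma fibre_sizes_in_Nset_iff:
  assumes g: "g \<in> {1..n} \<rightarrow>\<^sub>E Pow {1..length \<gamma>}"
  shows "(\<lambda>I. card {j\<in>{1..n}. g j = I}) \<in> Nset n d \<gamma> \<longleftrightarrow>
    (\<forall>i\<in>{1..length \<gamma>}. int (card {j\<in>{1..n}. i \<in> g j}) = int d + 1 - int (\<gamma> ! (i - 1)))
    \<and> (\<forall>I\<subseteq>{1..length \<gamma>}. 2 \<le> card I \<longrightarrow>
         int (card {j\<in>{1..n}. I \<subseteq> g j}) < int d + 1 - (\<Sum>i\<in>I. int (\<gamma> ! (i - 1))))"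
proof -
  let ?P = "Pow {1..length \<gamma>}"
  have fibres: "card {j\<in>{1..n}. g j \<in> {I\<in>?P. p I}} = (\<Sum>I\<in>{I\<in>?P. p I}. card {j\<in>{1..n}. g j = I})"
    for p by (rule card_preimage_eq_sum_fibres) auto
  have "{j\<in>{1..n}. g j \<in> {I\<in>?P. p I}} = {j\<in>{1..n}. p (g j)}" for p using g by auto
  with fibres have sum_fibres:
    "card {j\<in>{1..n}. p (g j)} = (\<Sum>I\<in>{I\<in>?P. p I}. card {j\<in>{1..n}. g j = I})" for p
    by simp
  have "card {j\<in>{1..n}. g j = I} = 0" if "I \<notin> ?P" for I
    using g that by auto
  moreover have "(\<Sum>I\<in>?P. card {j\<in>{1..n}. g j = I}) = card {j\<in>{1..n}. g j \<in> ?P}"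
    by (rule card_preimage_eq_sum_fibres[symmetric]) auto
  moreover have "{j\<in>{1..n}. g j \<in> ?P} = {1..n}" using g by auto
  ultimately show ?thesis
    unfolding Nset_def mem_Collect_eq
    using sum_fibres[of "\<lambda>I. _ \<in> I"] sum_fibres[of "\<lambda>I'. _ \<subseteq> I'"] by auto
qed

definition transpose_map :: "'a set \<Rightarrow> 'b set \<Rightarrow> ('b \<Rightarrow> 'a set) \<Rightarrow> 'a \<Rightarrow> 'b set" where
  "transpose_map A L f = restrict (\<lambda>j. {i\<in>L. j \<in> f i}) A"

lemma transpose_map_PiE: "transpose_map A L f \<in> A \<rightarrow>\<^sub>E Pow L"
  by (auto simp: transpose_map_def)

lemma transpose_map_transpose_map:
  assumes "f \<in> L \<rightarrow>\<^sub>E Pow A"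
  shows "transpose_map L A (transpose_map A L f) = f"
  using assms by (fastforce simp: transpose_map_def fun_eq_iff PiE_iff extensional_def)

lemma bij_betw_transpose_labelled_configs:
  "bij_betw (transpose_map {1..n} {1..length \<gamma>}) (labelled_configs n d \<gamma>)
     {g \<in> {1..n} \<rightarrow>\<^sub>E Pow {1..length \<gamma>}. (\<lambda>I. card {j\<in>{1..n}. g j = I}) \<in> Nset n d \<gamma>}"
proof (rule bij_betw_byWitness[where f' = "transpose_map {1..length \<gamma>} {1..n}"])
  let ?A = "{1..n}" and ?L = "{1..length \<gamma>}"
  show "\<forall>f\<in>labelled_configs n d \<gamma>. transpose_map ?L ?A (transpose_map ?A ?L f) = f"
    by (simp add: labelled_configs_def transpose_map_transpose_map)
  show "\<forall>g\<in>{g \<in> ?A \<rightarrow>\<^sub>E Pow ?L. (\<lambda>I. card {j\<in>?A. g j = I}) \<in> Nset n d \<gamma>}.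
      transpose_map ?A ?L (transpose_map ?L ?A g) = g"
    by (simp add: transpose_map_transpose_map)
  show "transpose_map ?A ?L ` labelled_configs n d \<gamma>
      \<subseteq> {g \<in> ?A \<rightarrow>\<^sub>E Pow ?L. (\<lambda>I. card {j\<in>?A. g j = I}) \<in> Nset n d \<gamma>}"
  proof (rule image_subsetI)
    fix f assume f: "f \<in> labelled_configs n d \<gamma>"
    let ?g = "transpose_map ?A ?L f"
    have "{j\<in>?A. i \<in> ?g j} = f i" if i: "i \<in> ?L" for i
    proof -
      have "f i \<subseteq> ?A" using f i by (auto simp: labelled_configs_def PiE_iff)
      then show ?thesis using i by (auto simp: transpose_map_def subset_iff)
    qed
    moreover have "{j\<in>?A. I \<subseteq> ?g j} = {j\<in>?A. \<forall>i\<in>I. j \<in> f i}" if "I \<subseteq> ?L" for I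
      using that by (auto simp: transpose_map_def)
    ultimately show "?g \<in> {g \<in> ?A \<rightarrow>\<^sub>E Pow ?L. (\<lambda>I. card {j\<in>?A. g j = I}) \<in> Nset n d \<gamma>}"
      using f transpose_map_PiE fibre_sizes_in_Nset_iff[OF transpose_map_PiE]
      by (simp add: labelled_configs_def)
  qed
  show "transpose_map ?L ?A ` {g \<in> ?A \<rightarrow>\<^sub>E Pow ?L. (\<lambda>I. card {j\<in>?A. g j = I}) \<in> Nset n d \<gamma>}
      \<subseteq> labelled_configs n d \<gamma>"
  proof (rule image_subsetI)
    fix g assume g: "g \<in> {g \<in> ?A \<rightarrow>\<^sub>E Pow ?L. (\<lambda>I. card {j\<in>?A. g j = I}) \<in> Nset n d \<gamma>}"
    let ?f = "transpose_map ?L ?A g"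
    have "{j\<in>?A. \<forall>i\<in>I. j \<in> ?f i} = {j\<in>?A. I \<subseteq> g j}" if "I \<subseteq> ?L" for I
      using that by (auto simp: transpose_map_def)
    then show "?f \<in> labelled_configs n d \<gamma>"
      using g fibre_sizes_in_Nset_iff[of g n \<gamma> d] transpose_map_PiE[of ?L ?A g]
      by (auto simp: labelled_configs_def transpose_map_def)
  qed
qed

lemma finite_Nset: "finite (Nset n d \<gamma>)"
proof -
  let ?P = "Pow {1..length \<gamma>}"
  have "\<nu> I \<le> n" if "\<nu> \<in> Nset n d \<gamma>" "I \<in> ?P" for \<nu> I
    using that member_le_sum[of I ?P \<nu>] by (auto simp: Nset_def)
  then have "(\<lambda>\<nu>. restrict \<nu> ?P) ` Nset n d \<gamma> \<subseteq> ?P \<rightarrow>\<^sub>E {0..n}"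
    by (auto simp only: image_subset_iff restrict_PiE_iff atLeastAtMost_iff)
  then have "finite ((\<lambda>\<nu>. restrict \<nu> ?P) ` Nset n d \<gamma>)"
    by (rule finite_subset) (simp add: finite_PiE)
  moreover have "inj_on (\<lambda>\<nu>. restrict \<nu> ?P) (Nset n d \<gamma>)"
  proof (rule inj_onI, rule ext)
    fix \<nu> \<mu> I assume \<nu>: "\<nu> \<in> Nset n d \<gamma>" and \<mu>: "\<mu> \<in> Nset n d \<gamma>"
      and eq: "restrict \<nu> ?P = restrict \<mu> ?P"
    show "\<nu> I = \<mu> I"
    proof (cases "I \<in> ?P")
      case True
      then show ?thesis using fun_cong[OF eq, of I] by simp
    next
      case False
      then show ?thesis using \<nu> \<mu> by (simp add: Nset_def)
    qed
  qed
  ultimately show ?thesis by (rule finite_imageD)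
qed

lemma fibre_maps_eq_if_in_Nset:
  assumes \<nu>: "\<nu> \<in> Nset n d \<gamma>"
  shows "fibre_maps {1..n} (Pow {1..length \<gamma>}) \<nu>
    = {g \<in> {1..n} \<rightarrow>\<^sub>E Pow {1..length \<gamma>}. (\<lambda>I. card {j\<in>{1..n}. g j = I}) = \<nu>}"
proof -
  let ?A = "{1..n}" and ?P = "Pow {1..length \<gamma>}"
  have "(\<forall>I\<in>?P. card {j\<in>?A. g j = I} = \<nu> I) \<longleftrightarrow> (\<lambda>I. card {j\<in>?A. g j = I}) = \<nu>"
    if g: "g \<in> ?A \<rightarrow>\<^sub>E ?P" for g
  proof -
    have "{j\<in>?A. g j = I} = {}" if "I \<notin> ?P" for I using g that by auto
    then have "card {j\<in>?A. g j = I} = \<nu> I" if "I \<notin> ?P" for I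
      using \<nu> that by (simp add: Nset_def)
    then show ?thesis unfolding fun_eq_iff by blast
  qed
  then show ?thesis by (auto simp: fibre_maps_def)
qed

lemma real_card_labelled_configs:
  "real (card (labelled_configs n d \<gamma>))
     = (\<Sum>\<nu>\<in>Nset n d \<gamma>. real (fact n) / (\<Prod>I\<in>Pow {1..length \<gamma>}. real (fact (\<nu> I))))"
proof -
  let ?A = "{1..n}" and ?P = "Pow {1..length \<gamma>}"
  have "card (labelled_configs n d \<gamma>)
      = card {g \<in> ?A \<rightarrow>\<^sub>E ?P. (\<lambda>I. card {j\<in>?A. g j = I}) \<in> Nset n d \<gamma>}"
    by (rule bij_betw_same_card[OF bij_betw_transpose_labelled_configs])
  also have "{g \<in> ?A \<rightarrow>\<^sub>E ?P. (\<lambda>I. card {j\<in>?A. g j = I}) \<in> Nset n d \<gamma>}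
      = (\<Union>\<nu>\<in>Nset n d \<gamma>. fibre_maps ?A ?P \<nu>)"
    using fibre_maps_eq_if_in_Nset by auto
  also have "card \<dots> = (\<Sum>\<nu>\<in>Nset n d \<gamma>. card (fibre_maps ?A ?P \<nu>))"
  proof (rule card_UN_disjoint)
    have "fibre_maps ?A ?P \<nu> \<inter> fibre_maps ?A ?P \<mu> = {}"
      if "\<nu> \<in> Nset n d \<gamma>" "\<mu> \<in> Nset n d \<gamma>" "\<nu> \<noteq> \<mu>" for \<nu> \<mu>
      using fibre_maps_eq_if_in_Nset[OF that(1)] fibre_maps_eq_if_in_Nset[OF that(2)] that(3) by auto
    then show "\<forall>\<nu>\<in>Nset n d \<gamma>. \<forall>\<mu>\<in>Nset n d \<gamma>. \<nu> \<noteq> \<mu> \<longrightarrow>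
        fibre_maps ?A ?P \<nu> \<inter> fibre_maps ?A ?P \<mu> = {}"
      by blast
  qed (auto simp: finite_Nset finite_fibre_maps)
  finally have "real (card (labelled_configs n d \<gamma>)) = (\<Sum>\<nu>\<in>Nset n d \<gamma>. real (card (fibre_maps ?A ?P \<nu>)))"
    by simp
  also have "\<dots> = (\<Sum>\<nu>\<in>Nset n d \<gamma>. real (fact n) / (\<Prod>I\<in>?P. real (fact (\<nu> I))))"
    by (rule sum.cong[OF refl]) (use real_card_fibre_maps[of ?P ?A] in \<open>simp add: Nset_def\<close>)
  finally show ?thesis .
qed

section \<open>Labelled configurations and the set L(n,d)\<close>

lemma mset_nth_pred_mset_set:
  "image_mset (\<lambda>i. xs ! (i - 1)) (mset_set {1..length xs}) = mset xs"
proof -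
  have enum: "mset_set {1..length xs} = mset [1..<Suc (length xs)]"
    by (metis atLeastLessThanSuc_atLeastAtMost distinct_upt mset_set_set set_upt)
  have shift: "map (\<lambda>i. xs ! (i - 1)) [1..<Suc (length xs)] = xs"
    by (rule nth_equalityI) (simp_all del: upt_Suc)
  show ?thesis by (simp only: enum mset_map[symmetric] shift)
qed

lemma rev_sort_eq_if_sorted_desc:
  fixes xs :: "'a::linorder list"
  assumes "sorted_wrt (\<ge>) xs"
  shows "rev (sort xs) = xs"
proof -
  have "sorted (rev xs)" using assms by (simp add: sorted_wrt_rev)
  then have "sort xs = rev xs" by (intro properties_for_sort) auto
  then show ?thesis by simp
qed

lemma Dfun_image:
  assumes "inj_on f L" "I \<subseteq> L" "I \<noteq> {}" "\<forall>i\<in>L. f i \<subseteq> A"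
  shows "Dfun d (f ` I) = int d + 1 - int (card {j\<in>A. \<forall>i\<in>I. j \<in> f i})
            - (\<Sum>i\<in>I. int d + 1 - int (card (f i)))"
proof -
  have "\<Inter> (f ` I) = {j\<in>A. \<forall>i\<in>I. j \<in> f i}" using assms by auto
  moreover have "rho d (f ` I) = (\<Sum>i\<in>I. int d + 1 - int (card (f i)))"
    unfolding rho_def codim_def using inj_on_subset[OF assms(1,2)] by (simp add: sum.reindex)
  ultimately show ?thesis by (simp add: Dfun_def codim_def)
qed

lemma labelled_config_codim:
  assumes "f \<in> labelled_configs n d \<gamma>" "i \<in> {1..length \<gamma>}"
  shows "d + 1 - card (f i) = \<gamma> ! (i - 1)"
proof -
  have "int (card (f i)) = int d + 1 - int (\<gamma> ! (i - 1))"
    using assms by (simp add: labelled_configs_def)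
  then show ?thesis by linarith
qed

lemma inj_on_labelled_config:
  assumes f: "f \<in> labelled_configs n d \<gamma>" and pos: "\<forall>x\<in>set \<gamma>. 0 < x"
  shows "inj_on f {1..length \<gamma>}"
proof (rule inj_onI, rule ccontr)
  fix i i' assume i: "i \<in> {1..length \<gamma>}" and i': "i' \<in> {1..length \<gamma>}"
    and eq: "f i = f i'" and "i \<noteq> i'"
  have pair: "{i, i'} \<subseteq> {1..length \<gamma>}" "2 \<le> card {i, i'}" using i i' \<open>i \<noteq> i'\<close> by auto
  have "\<forall>I\<subseteq>{1..length \<gamma>}. 2 \<le> card I \<longrightarrow>
      int (card {j\<in>{1..n}. \<forall>i\<in>I. j \<in> f i}) < int d + 1 - (\<Sum>i\<in>I. int (\<gamma> ! (i - 1)))"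
    using f by (simp add: labelled_configs_def)
  from this[rule_format, OF pair] have lt: "int (card {j\<in>{1..n}. \<forall>x\<in>{i, i'}. j \<in> f x})
      < int d + 1 - (\<Sum>x\<in>{i, i'}. int (\<gamma> ! (x - 1)))" .
  have sum_pair: "(\<Sum>x\<in>{i, i'}. int (\<gamma> ! (x - 1))) = int (\<gamma> ! (i - 1)) + int (\<gamma> ! (i' - 1))"
    using \<open>i \<noteq> i'\<close> by simp
  have inter_pair: "{j\<in>{1..n}. \<forall>x\<in>{i, i'}. j \<in> f x} = f i"
  proof -
    have "f i \<subseteq> {1..n}" using f i by (auto simp: labelled_configs_def PiE_iff)
    then show ?thesis using eq by auto
  qed
  from lt have "int (card (f i)) < int d + 1 - (int (\<gamma> ! (i - 1)) + int (\<gamma> ! (i' - 1)))"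
    unfolding inter_pair sum_pair .
  moreover have "int (card (f i)) = int d + 1 - int (\<gamma> ! (i - 1))"
    using f i by (simp add: labelled_configs_def)
  moreover have "\<gamma> ! (i' - 1) > 0"
    using pos i' by (auto intro: nth_mem)
  ultimately show False by linarith
qed

lemma codim_sum_labelled_config:
  assumes "f \<in> labelled_configs n d \<gamma>" "I \<subseteq> {1..length \<gamma>}"
  shows "(\<Sum>i\<in>I. int d + 1 - int (card (f i))) = (\<Sum>i\<in>I. int (\<gamma> ! (i - 1)))"
  using assms by (intro sum.cong) (auto simp: labelled_configs_def)

lemma labelled_config_image_in_Lset:
  assumes f: "f \<in> labelled_configs n d \<gamma>" and pos: "\<forall>x\<in>set \<gamma>. 0 < x"
  shows "f ` {1..length \<gamma>} \<in> Lset n d"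
proof -
  let ?L = "{1..length \<gamma>}"
  have inj: "inj_on f ?L" using inj_on_labelled_config[OF f pos] .
  have sub: "\<forall>i\<in>?L. f i \<subseteq> {1..n}" using f by (auto simp: labelled_configs_def PiE_iff)
  have "Dfun d T' > 0" if T': "T' \<subseteq> f ` ?L" "card T' > 1" for T'
  proof -
    define I where "I = {i\<in>?L. f i \<in> T'}"
    have I: "I \<subseteq> ?L" "f ` I = T'" using T' by (auto simp: I_def)
    then have "card I = card T'" using card_image inj_on_subset[OF inj] by metis
    then have "I \<noteq> {}" "2 \<le> card I" using T' by auto
    then have "int (card {j\<in>{1..n}. \<forall>i\<in>I. j \<in> f i}) < int d + 1 - (\<Sum>i\<in>I. int (\<gamma> ! (i - 1)))"
      using f I(1) by (simp add: labelled_configs_def)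
    then show ?thesis
      using Dfun_image[OF inj I(1) \<open>I \<noteq> {}\<close> sub, of d] codim_sum_labelled_config[OF f I(1)] I(2)
      by simp
  qed
  moreover have "card (f i) \<le> d" if "i \<in> ?L" for i
  proof -
    have "\<gamma> ! (i - 1) > 0" using pos that by (auto intro: nth_mem)
    then show ?thesis using labelled_config_codim[OF f that] by linarith
  qed
  ultimately show ?thesis using sub by (auto simp: Lset_def)
qed

lemma gammaT_labelled_config_image:
  assumes f: "f \<in> labelled_configs n d \<gamma>" and pos: "\<forall>x\<in>set \<gamma>. 0 < x"
    and "\<gamma> \<noteq> []" and "sorted_wrt (\<ge>) \<gamma>"
  shows "gammaT d (f ` {1..length \<gamma>}) = \<gamma>"
proof -
  let ?L = "{1..length \<gamma>}"
  have inj: "inj_on f ?L" using inj_on_labelled_config[OF f pos] .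
  have "image_mset (\<lambda>X. d + 1 - card X) (mset_set (f ` ?L))
      = image_mset (\<lambda>i. d + 1 - card (f i)) (mset_set ?L)"
    unfolding image_mset_mset_set[OF inj, symmetric] by (simp add: multiset.map_comp o_def)
  also have "\<dots> = image_mset (\<lambda>i. \<gamma> ! (i - 1)) (mset_set ?L)"
    by (rule image_mset_cong) (use labelled_config_codim[OF f] in auto)
  also have "\<dots> = mset \<gamma>" by (rule mset_nth_pred_mset_set)
  finally have "image_mset (\<lambda>X. d + 1 - card X) (mset_set (f ` ?L)) = mset \<gamma>" .
  moreover have "f ` ?L \<noteq> {}" using assms(3) by (simp add: Suc_le_eq)
  ultimately show ?thesis
    using assms(4) by (simp add: gammaT_def rev_sort_eq_if_sorted_desc)
qed

lemma colour_bijection_in_labelled_configs: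
  assumes T: "T \<in> Lset n d"
    and h: "h \<in> colour_bijections {1..length \<gamma>} T (\<lambda>i. \<gamma> ! (i - 1)) (\<lambda>X. d + 1 - card X)"
  shows "h \<in> labelled_configs n d \<gamma>"
proof -
  let ?L = "{1..length \<gamma>}"
  have hE: "h \<in> ?L \<rightarrow>\<^sub>E T" and hb: "bij_betw h ?L T"
    and hc: "\<forall>i\<in>?L. d + 1 - card (h i) = \<gamma> ! (i - 1)"
    using h by (auto simp: colour_bijections_def)
  have TA: "T \<subseteq> Pow {1..n}" and Tc: "\<forall>X\<in>T. card X \<le> d"
    and TD: "\<forall>T'\<subseteq>T. card T' > 1 \<longrightarrow> Dfun d T' > 0"
    using T by (auto simp: Lset_def)
  have inj: "inj_on h ?L" and hT: "h ` ?L = T" using hb by (auto simp: bij_betw_def)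
  have sub: "\<forall>i\<in>?L. h i \<subseteq> {1..n}" using hE TA by auto
  have hcard: "\<forall>i\<in>?L. int (card (h i)) = int d + 1 - int (\<gamma> ! (i - 1))"
  proof
    fix i assume i: "i \<in> ?L"
    then have "card (h i) \<le> d" using Tc hE by auto
    moreover have "d + 1 - card (h i) = \<gamma> ! (i - 1)" using hc i by blast
    ultimately show "int (card (h i)) = int d + 1 - int (\<gamma> ! (i - 1))" by linarith
  qed
  have "int (card {j\<in>{1..n}. \<forall>i\<in>I. j \<in> h i}) < int d + 1 - (\<Sum>i\<in>I. int (\<gamma> ! (i - 1)))"
    if I: "I \<subseteq> ?L" "2 \<le> card I" for I
  proof -
    have "card (h ` I) = card I" using inj_on_subset[OF inj I(1)] card_image by metis
    moreover have "h ` I \<subseteq> T" using I(1) hT by auto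
    ultimately have "Dfun d (h ` I) > 0" using TD I(2) by auto
    moreover have "(\<Sum>i\<in>I. int d + 1 - int (card (h i))) = (\<Sum>i\<in>I. int (\<gamma> ! (i - 1)))"
      using hcard I(1) by (intro sum.cong) auto
    moreover have "I \<noteq> {}" using I(2) by auto
    ultimately show ?thesis using Dfun_image[OF inj I(1) _ sub, of d] by simp
  qed
  moreover have "h \<in> ?L \<rightarrow>\<^sub>E Pow {1..n}" using hE TA by auto
  ultimately show ?thesis using hcard by (simp add: labelled_configs_def)
qed

lemma labelled_configs_onto_eq_colour_bijections:
  assumes T: "T \<in> Lset n d" and pos: "\<forall>x\<in>set \<gamma>. 0 < x"
  shows "{f \<in> labelled_configs n d \<gamma>. f ` {1..length \<gamma>} = T}
    = colour_bijections {1..length \<gamma>} T (\<lambda>i. \<gamma> ! (i - 1)) (\<lambda>X. d + 1 - card X)"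
proof (intro equalityI subsetI)
  let ?L = "{1..length \<gamma>}"
  fix f assume "f \<in> {f \<in> labelled_configs n d \<gamma>. f ` ?L = T}"
  then have f: "f \<in> labelled_configs n d \<gamma>" and fT: "f ` ?L = T" by auto
  have "f \<in> ?L \<rightarrow>\<^sub>E T" using f fT by (auto simp: labelled_configs_def PiE_iff)
  then show "f \<in> colour_bijections ?L T (\<lambda>i. \<gamma> ! (i - 1)) (\<lambda>X. d + 1 - card X)"
    using inj_on_labelled_config[OF f pos] fT labelled_config_codim[OF f]
    by (simp add: colour_bijections_def bij_betw_def)
next
  fix h assume h: "h \<in> colour_bijections {1..length \<gamma>} T (\<lambda>i. \<gamma> ! (i - 1)) (\<lambda>X. d + 1 - card X)"
  then have "h ` {1..length \<gamma>} = T" by (simp add: colour_bijections_def bij_betw_def)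
  with colour_bijection_in_labelled_configs[OF T h]
  show "h \<in> {f \<in> labelled_configs n d \<gamma>. f ` {1..length \<gamma>} = T}" by simp
qed

lemma image_mset_codim_gammaT:
  assumes "finite T" "gammaT d T = \<gamma>" "0 \<notin> set \<gamma>"
  shows "image_mset (\<lambda>X. d + 1 - card X) (mset_set T) = mset \<gamma>"
proof -
  have "T \<noteq> {}" using assms(2,3) by (auto simp: gammaT_def)
  then have "mset (rev (sorted_list_of_multiset (image_mset (\<lambda>X. d + 1 - card X) (mset_set T)))) = mset \<gamma>"
    using assms(2) by (simp add: gammaT_def)
  then show ?thesis by simp
qed

lemma card_codim_top_le_one:
  assumes "finite A" "T \<subseteq> Pow A"
  shows "card {X\<in>T. d + 1 - card X = d + 1} \<le> 1"
proof -
  have "{X\<in>T. d + 1 - card X = d + 1} \<subseteq> {{}}"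
  proof
    fix X assume X: "X \<in> {X\<in>T. d + 1 - card X = d + 1}"
    then have "finite X" using assms by (auto intro: finite_subset)
    moreover have "card X = 0" using X by auto
    ultimately show "X \<in> {{}}" by simp
  qed
  then show ?thesis using card_mono[of "{{}}" "{X\<in>T. d + 1 - card X = d + 1}"] by simp
qed

lemma card_labelled_configs_onto:
  assumes T: "T \<in> Lset n d" and gT: "gammaT d T = \<gamma>" and pos: "\<forall>x\<in>set \<gamma>. 0 < x"
  shows "card {f \<in> labelled_configs n d \<gamma>. f ` {1..length \<gamma>} = T} = (\<Prod>k=1..d. fact (mult_part k \<gamma>))"
proof -
  let ?L = "{1..length \<gamma>}" and ?a = "\<lambda>i. \<gamma> ! (i - 1)" and ?b = "\<lambda>X. d + 1 - card X"
  have TA: "T \<subseteq> Pow {1..n}" and Tc: "\<forall>X\<in>T. card X \<le> d" using T by (auto simp: Lset_def)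
  have finT: "finite T" using TA by (rule finite_subset) simp
  have mT: "image_mset ?b (mset_set T) = mset \<gamma>"
    using image_mset_codim_gammaT[OF finT gT] pos by auto
  have count_L: "card {i\<in>?L. ?a i = k} = count (mset \<gamma>) k" for k
    using count_image_mset_eq_card_vimage[of ?L ?a k, unfolded mset_nth_pred_mset_set] by simp
  have count_T: "card {X\<in>T. ?b X = k} = count (mset \<gamma>) k" for k
    using count_image_mset_eq_card_vimage[OF finT, of ?b k, unfolded mT] by simp
  have "?a ` ?L \<subseteq> {1..d + 1}"
  proof -
    have "?a ` ?L = set \<gamma>"
      using set_image_mset[of ?a "mset_set ?L", unfolded mset_nth_pred_mset_set] by simp
    also have "\<dots> = ?b ` T" using set_image_mset[of ?b "mset_set T", unfolded mT] finT by simp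
    also have "\<dots> \<subseteq> {1..d + 1}" using Tc by auto
    finally show ?thesis .
  qed
  moreover have "card {i\<in>?L. ?a i = k} = card {X\<in>T. ?b X = k}" for k
    by (simp only: count_L count_T)
  ultimately have "card (colour_bijections ?L T ?a ?b) = (\<Prod>k\<in>{1..d + 1}. fact (card {i\<in>?L. ?a i = k}))"
    using finT by (intro card_colour_bijections) simp_all
  also have "\<dots> = (\<Prod>k=1..d. fact (mult_part k \<gamma>)) * fact (count (mset \<gamma>) (d + 1))"
    by (simp only: count_L) (simp add: prod.cl_ivl_Suc mult_part_def count_mset)
  also have "fact (count (mset \<gamma>) (d + 1)) = (1 :: nat)"
  proof -
    have "count (mset \<gamma>) (d + 1) \<le> 1"
      using card_codim_top_le_one[OF _ TA, of d] count_T[of "d + 1"] by simp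
    moreover have "fact m = (1 :: nat)" if "m \<le> 1" for m
      using that by (cases m) auto
    ultimately show ?thesis by blast
  qed
  finally show ?thesis unfolding labelled_configs_onto_eq_colour_bijections[OF T pos] by simp
qed

lemma card_labelled_configs:
  assumes "\<gamma> \<noteq> []" "sorted_wrt (\<ge>) \<gamma>" "\<forall>x\<in>set \<gamma>. 0 < x"
  shows "card (labelled_configs n d \<gamma>) = lambda_count n d \<gamma> * (\<Prod>k=1..d. fact (mult_part k \<gamma>))"
proof -
  let ?L = "{1..length \<gamma>}" and ?Target = "{T \<in> Lset n d. gammaT d T = \<gamma>}"
  have "finite ?Target"
    by (rule finite_subset[of _ "Pow (Pow {1..n})"]) (auto simp: Lset_def)
  have "f ` ?L \<in> ?Target" if "f \<in> labelled_configs n d \<gamma>" for f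
    using labelled_config_image_in_Lset[OF that assms(3)] gammaT_labelled_config_image[OF that assms(3,1,2)]
    by simp
  then have "labelled_configs n d \<gamma> = (\<Union>T\<in>?Target. {f \<in> labelled_configs n d \<gamma>. f ` ?L = T})"
    by auto
  also have "card \<dots> = (\<Sum>T\<in>?Target. card {f \<in> labelled_configs n d \<gamma>. f ` ?L = T})"
    by (rule card_UN_disjoint) (use \<open>finite ?Target\<close> finite_labelled_configs in auto)
  also have "\<dots> = card ?Target * (\<Prod>k=1..d. fact (mult_part k \<gamma>))"
    using card_labelled_configs_onto assms(3) by simp
  finally show ?thesis by (simp add: lambda_count_def)
qed

theorem proposition4p7:
  fixes n d :: nat and \<gamma> :: "nat list"
  assumes "n > d"
    and "\<gamma> \<noteq> []"
    and "sorted_wrt (\<ge>) \<gamma>"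
    and "\<forall>x\<in>set \<gamma>. x > 0"
  shows "real (lambda_count n d \<gamma>)
           = (1 / (\<Prod>k=1..d. real (fact (mult_part k \<gamma>))))
             * (\<Sum>\<nu>\<in>Nset n d \<gamma>.
                  real (fact n) / (\<Prod>I\<in>Pow {1..length \<gamma>}. real (fact (\<nu> I))))
       \<and> (1 / (\<Prod>k=1..d. real (fact (mult_part k \<gamma>))))
             * (\<Sum>\<nu>\<in>Nset n d \<gamma>.
                  real (fact n) / (\<Prod>I\<in>Pow {1..length \<gamma>}. real (fact (\<nu> I))))
         = (1 / (\<Prod>k=1..d. real (fact (mult_part k \<gamma>))))
             * (\<Sum>\<nu>\<in>Nset n d \<gamma>.
                  real (fact (\<Sum>I\<in>Pow {1..length \<gamma>} - {{}}. \<nu> I))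
                    / (\<Prod>I\<in>Pow {1..length \<gamma>} - {{}}. real (fact (\<nu> I)))
                  * real (n choose (\<Sum>I\<in>Pow {1..length \<gamma>} - {{}}. \<nu> I)))"
proof -
  let ?m = "\<Prod>k=1..d. real (fact (mult_part k \<gamma>))" and ?P = "Pow {1..length \<gamma>}"
  have "real (lambda_count n d \<gamma>) * ?m = real (card (labelled_configs n d \<gamma>))"
    using card_labelled_configs[OF assms(2-4)] by (metis of_nat_mult of_nat_prod)
  moreover have "?m \<noteq> 0" by (simp add: prod_zero_iff)
  ultimately have lambda: "real (lambda_count n d \<gamma>) = 1 / ?m * real (card (labelled_configs n d \<gamma>))"
    by (simp add: field_simps)
  have split: "(\<Sum>\<nu>\<in>Nset n d \<gamma>. real (fact n) / (\<Prod>I\<in>?P. real (fact (\<nu> I))))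
    = (\<Sum>\<nu>\<in>Nset n d \<gamma>. real (fact (\<Sum>I\<in>?P - {{}}. \<nu> I)) / (\<Prod>I\<in>?P - {{}}. real (fact (\<nu> I)))
        * real (n choose (\<Sum>I\<in>?P - {{}}. \<nu> I)))"
    by (rule sum.cong[OF refl], rule multinomial_split_off) (auto simp: Nset_def)
  show ?thesis
    unfolding lambda real_card_labelled_configs split by (rule conjI refl)+
qed

end
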